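(* Let $0\le\gamma<1$ and $\beta>0$, and let $f\in\mathcal{B}(\Omega_\gamma)$ have the expansion $f(z)=\sum_{n=0}^\infty a_n\left(z+\frac{\gamma}{1-\gamma}\right)^n$ in $\Omega_\gamma$. Then $$\sum_{n=0}^\infty \frac{|a_n|}{(n+\beta)(1-\gamma)^n}\rho^n\le\frac{1}{\beta}\qquad\text{for all }\rho\in[0,\rho_1],$$ where $\rho_1=\rho_1(\beta)$ is the unique root in $(0,1)$ of the equation $$\frac{1}{\beta}-2\sum_{n=1}^\infty\frac{\rho^n}{n+\beta}=0.$$ The number $\rho_1$ is best possible: for every $\rho\in(\rho_1,1)$ there exists $f\in\mathcal{B}(\Omega_\gamma)$ for which the left-hand side exceeds $1/\beta$.
   Context: For $\gamma\in[0,1)$, $\Omega_\gamma=\left\{z\in\mathbb{C}:\left|z+\frac{\gamma}{1-\gamma}\right|<\frac{1}{1-\gamma}\right\}$, the open disk with center $-\frac{\gamma}{1-\gamma}$ and radius $\frac{1}{1-\gamma}$. It contains the unit disk $\mathbb{D}$. The class $\mathcal{B}(\Omega_\gamma)$ consists of all analytic functions $f$ on $\Omega_\gamma$ with $|f|\le 1$ on $\Omega_\gamma$. The parameter $\rho\in[0,1)$ plays the role of $|\gamma+(1-\gamma)z|$ for $z\in\Omega_\gamma$. *)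

theory Defs
  imports "HOL-Analysis.Analysis"
begin

definition Omega :: "real \<Rightarrow> complex set" where
  "Omega \<gamma> = ball (- complex_of_real (\<gamma> / (1 - \<gamma>))) (1 / (1 - \<gamma>))"

definition boundedB :: "real \<Rightarrow> (complex \<Rightarrow> complex) \<Rightarrow> bool" where
  "boundedB \<gamma> f \<longleftrightarrow> f holomorphic_on Omega \<gamma> \<and> (\<forall>z\<in>Omega \<gamma>. norm (f z) \<le> 1)"

definition has_expansion :: "real \<Rightarrow> (complex \<Rightarrow> complex) \<Rightarrow> (nat \<Rightarrow> complex) \<Rightarrow> bool" where
  "has_expansion \<gamma> f a \<longleftrightarrow>
     (\<forall>z\<in>Omega \<gamma>. (\<lambda>n. a n * (z + complex_of_real (\<gamma> / (1 - \<gamma>))) ^ n) sums f z)"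

definition rho_eq :: "real \<Rightarrow> real \<Rightarrow> real" where
  "rho_eq \<beta> \<rho> = 1 / \<beta> - 2 * (\<Sum>n. \<rho> ^ (Suc n) / (real (Suc n) + \<beta>))"

definition lhs_sum :: "real \<Rightarrow> real \<Rightarrow> (nat \<Rightarrow> complex) \<Rightarrow> real \<Rightarrow> real" where
  "lhs_sum \<gamma> \<beta> a \<rho> = (\<Sum>n. norm (a n) / ((real n + \<beta>) * (1 - \<gamma>) ^ n) * \<rho> ^ n)"

end

theory Submission
  imports Defs "HOL-Complex_Analysis.Complex_Analysis"
begin

text \<open>Under \<open>w = (1 - \<gamma>)(z + \<gamma>/(1 - \<gamma>))\<close>, \<open>\<Omega>\<^sub>\<gamma>\<close> becomes the unit disc and
  \<open>b\<^sub>n = a\<^sub>n/(1 - \<gamma>)\<^sup>n\<close> become the Taylor coefficients of a self-map of the disc, so the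
  question is about the unit disc only. There Wiener's inequality \<open>\<bar>b\<^sub>n\<bar> \<le> 1 - \<bar>b\<^sub>0\<bar>\<^sup>2\<close>
  bounds the sum by \<open>A/\<beta> + (1 - A\<^sup>2) S(\<rho>)\<close>, where \<open>A = \<bar>b\<^sub>0\<bar>\<close> and
  \<open>S(\<rho>) = \<Sum>\<^bsub>n\<ge>1\<^esub> \<rho>\<^sup>n/(n + \<beta>)\<close> is increasing; at \<open>2 \<beta> S(\<rho>) \<le> 1\<close> this is
  \<open>\<le> 1/\<beta> - (1 - A)\<^sup>2/(2\<beta>)\<close>. Sharpness comes from the disc automorphisms \<open>(t - w)/(1 - t w)\<close>,
  whose coefficients \<open>t, -(1 - t\<^sup>2) t\<^bsup>n-1\<^esup>\<close> approach Wiener's bound as \<open>t \<rightarrow> 1\<close>.\<close>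

lemma norm_diff_le_norm_one_minus_cnj_mult:
  fixes z b :: complex
  assumes "norm z \<le> 1" "norm b < 1"
  shows "norm (z - b) \<le> norm (1 - cnj b * z)"
proof -
  have "norm (1 - cnj b * z)^2 - norm (z - b)^2 = (1 - norm b^2) * (1 - norm z^2)"
    unfolding cmod_power2 by (simp add: algebra_simps power2_eq_square)
  moreover have "(1 - norm b^2) * (1 - norm z^2) \<ge> 0"
    using assms by (intro mult_nonneg_nonneg) (simp_all add: abs_square_le_1)
  ultimately have "norm (z - b)^2 \<le> norm (1 - cnj b * z)^2"
    by linarith
  then show ?thesis
    by (rule power2_le_imp_le) simp
qed

lemma tendsto_at_left_1_le:
  fixes f :: "real \<Rightarrow> real"
  assumes "(f \<longlongrightarrow> L) (at_left 1)" and "\<And>t. 0 < t \<Longrightarrow> t < 1 \<Longrightarrow> f t \<le> c"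
  shows "L \<le> c"
proof (rule tendsto_upperbound[OF assms(1) _ trivial_limit_at_left_real])
  have "\<forall>\<^sub>F t in at_left (1::real). t \<in> {0<..<1}"
    by (rule eventually_at_left_real) simp
  then show "\<forall>\<^sub>F t in at_left 1. f t \<le> c"
    by eventually_elim (use assms(2) in auto)
qed

lemma tendsto_at_left_1_gt_imp_ex:
  fixes f :: "real \<Rightarrow> real"
  assumes "(f \<longlongrightarrow> L) (at_left 1)" and "c < L"
  shows "\<exists>t. 0 < t \<and> t < 1 \<and> c < f t"
proof -
  have "\<forall>\<^sub>F t in at_left (1::real). t \<in> {0<..<1}"
    by (rule eventually_at_left_real) simp
  with order_tendstoD(1)[OF assms] have "\<forall>\<^sub>F t in at_left 1. c < f t \<and> t \<in> {0<..<1}"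
    by eventually_elim auto
  then show ?thesis
    using eventually_happens'[OF trivial_limit_at_left_real] by auto
qed

lemma sum_powers_root_unity:
  assumes "n \<ge> 1"
  shows "(\<Sum>k<n. (exp (2 * pi * \<i> / of_nat n) ^ m) ^ k) = (if n dvd m then of_nat n else 0)"
proof -
  define q where "q = exp (2 * pi * \<i> / of_nat n) ^ m"
  have q: "q = exp (2 * of_real pi * \<i> * of_nat m / of_nat n)"
    by (simp add: q_def exp_of_nat_mult[symmetric] mult_ac)
  have "q ^ n = 1"
    unfolding q by (rule complex_root_unity) (use assms in simp)
  moreover have "q = 1 \<longleftrightarrow> n dvd m"
    unfolding q by (rule complex_root_unity_eq_1[OF assms])
  ultimately show ?thesis
    unfolding q_def[symmetric] by (auto simp: geometric_sum)
qed

lemma norm_at_0_le_1_if_power_mult_bounded: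
  fixes Q :: "complex \<Rightarrow> complex"
  assumes holo: "Q holomorphic_on ball 0 1"
    and bound: "\<And>w. norm w < 1 \<Longrightarrow> norm (w ^ n * Q w) \<le> 1"
  shows "norm (Q 0) \<le> 1"
proof (rule tendsto_at_left_1_le)
  show "((\<lambda>r. norm (Q 0) * r ^ n) \<longlongrightarrow> norm (Q 0)) (at_left 1)"
    by (auto intro!: tendsto_eq_intros)
  fix r :: real assume r: "0 < r" "r < 1"
  have "norm ((deriv ^^ 0) Q 0) \<le> fact 0 * (1 / r ^ n) / r ^ 0"
  proof (rule Cauchy_inequality)
    show "Q holomorphic_on ball 0 r"
      using r by (intro holomorphic_on_subset[OF holo]) auto
    show "continuous_on (cball 0 r) Q"
      using r by (intro holomorphic_on_imp_continuous_on holomorphic_on_subset[OF holo]) auto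
    fix x :: complex assume "norm (0 - x) = r"
    then have "norm x = r" by simp
    then have "norm (Q x) * r ^ n \<le> 1"
      using bound[of x] r by (simp add: norm_mult norm_power mult.commute)
    then show "norm (Q x) \<le> 1 / r ^ n"
      using r by (simp add: pos_le_divide_eq)
  qed (fact r)
  then have "norm (Q 0) \<le> 1 / r ^ n"
    by simp
  then show "norm (Q 0) * r ^ n \<le> 1"
    using r by (simp add: pos_le_divide_eq)
qed

section \<open>Coefficients of self-maps of the unit disc\<close>

definition schur_coeffs :: "(nat \<Rightarrow> complex) \<Rightarrow> bool" where
  "schur_coeffs b \<longleftrightarrow>
     (\<forall>w. norm w < 1 \<longrightarrow> summable (\<lambda>n. b n * w ^ n) \<and> norm (\<Sum>n. b n * w ^ n) \<le> 1)"

lemma schur_coeffsI: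
  assumes "\<And>w. norm w < 1 \<Longrightarrow> (\<lambda>n. b n * w ^ n) sums g w"
    and "\<And>w. norm w < 1 \<Longrightarrow> norm (g w) \<le> 1"
  shows "schur_coeffs b"
  using assms unfolding schur_coeffs_def by (metis sums_iff)

lemma schur_coeffs_norm_0_le:
  assumes "schur_coeffs b"
  shows "norm (b 0) \<le> 1"
  using assms unfolding schur_coeffs_def by (metis norm_zero powser_zero zero_less_one)

lemma schur_coeffs_scale:
  assumes "schur_coeffs b" "norm c \<le> 1"
  shows "schur_coeffs (\<lambda>n. c * b n)"
proof (rule schur_coeffsI)
  fix w :: complex assume w: "norm w < 1"
  then have "summable (\<lambda>n. b n * w ^ n)" and le: "norm (\<Sum>n. b n * w ^ n) \<le> 1"
    using assms(1) by (auto simp: schur_coeffs_def)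
  then show "(\<lambda>n. c * b n * w ^ n) sums (c * (\<Sum>n. b n * w ^ n))"
    by (simp add: mult.assoc sums_mult summable_sums)
  show "norm (c * (\<Sum>n. b n * w ^ n)) \<le> 1"
    unfolding norm_mult using mult_mono[OF assms(2) le] by simp
qed

text \<open>Averaging over the rotations by the \<open>n\<close>-th roots of unity keeps only the
  coefficients whose index is a multiple of \<open>n\<close>.\<close>

lemma schur_coeffs_lacunary:
  assumes b: "schur_coeffs b" and n: "n \<ge> 1"
  shows "schur_coeffs (\<lambda>m. if n dvd m then b m else 0)"
proof (rule schur_coeffsI)
  define \<omega> where "\<omega> = exp (2 * pi * \<i> / of_nat n)"
  define g where "g w = (\<Sum>m. b m * w ^ m)" for w
  have norm_\<omega>: "norm (\<omega> ^ k * w) = norm w" for k w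
    by (simp add: \<omega>_def norm_mult norm_power)
  fix w :: complex assume w: "norm w < 1"
  have "(\<lambda>m. (\<Sum>k<n. b m * (\<omega> ^ k * w) ^ m) / of_nat n) sums ((\<Sum>k<n. g (\<omega> ^ k * w)) / of_nat n)"
    using b w unfolding schur_coeffs_def g_def
    by (intro sums_divide sums_sum summable_sums) (simp add: norm_\<omega>)
  moreover have "(\<Sum>k<n. b m * (\<omega> ^ k * w) ^ m) / of_nat n = (if n dvd m then b m else 0) * w ^ m" for m
  proof -
    have "(\<Sum>k<n. b m * (\<omega> ^ k * w) ^ m) = b m * w ^ m * (\<Sum>k<n. (\<omega> ^ m) ^ k)"
      by (simp add: sum_distrib_left power_mult_distrib mult_ac flip: power_mult)
    then show ?thesis
      using sum_powers_root_unity[OF n, of m] n by (simp add: \<omega>_def)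
  qed
  ultimately show "(\<lambda>m. (if n dvd m then b m else 0) * w ^ m) sums ((\<Sum>k<n. g (\<omega> ^ k * w)) / of_nat n)"
    by simp
  have "norm (\<Sum>k<n. g (\<omega> ^ k * w)) \<le> (\<Sum>k<n. 1)"
    using b w unfolding schur_coeffs_def g_def by (intro sum_norm_le) (simp add: norm_\<omega>)
  then show "norm ((\<Sum>k<n. g (\<omega> ^ k * w)) / of_nat n) \<le> 1"
    using n by (simp add: norm_divide)
qed

lemma powser_split_power_mult:
  fixes d :: "nat \<Rightarrow> complex" and n :: nat
  assumes summ: "\<And>w. norm w < 1 \<Longrightarrow> summable (\<lambda>m. d m * w ^ m)"
  defines "P \<equiv> \<lambda>w. \<Sum>m. d (m + n) * w ^ m"
  shows "P holomorphic_on ball 0 1" and "P 0 = d n"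
    and "\<And>w. norm w < 1 \<Longrightarrow> (\<Sum>m. d m * w ^ m) = (\<Sum>i<n. d i * w ^ i) + w ^ n * P w"
proof -
  have summ_tail: "summable (\<lambda>m. d (m + n) * w ^ m)" if "norm w < 1" for w
    using summ[OF that] by (simp add: summable_powser_ignore_initial_segment)
  show "P holomorphic_on ball 0 1"
    unfolding holomorphic_on_open[OF open_ball] P_def
    using termdiffs_strong'[of 1, OF summ_tail] by auto blast
  show "P 0 = d n"
    unfolding P_def by (subst powser_zero) simp
  fix w :: complex assume w: "norm w < 1"
  have "(\<Sum>m. d m * w ^ m) = (\<Sum>m. d (m + n) * w ^ (m + n)) + (\<Sum>i<n. d i * w ^ i)"
    using summ[OF w] by (rule suminf_split_initial_segment)
  also have "(\<Sum>m. d (m + n) * w ^ (m + n)) = w ^ n * P w"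
    unfolding P_def using summ_tail[OF w]
    by (subst suminf_mult[symmetric]) (simp_all add: power_add mult_ac)
  finally show "(\<Sum>m. d m * w ^ m) = (\<Sum>i<n. d i * w ^ i) + w ^ n * P w"
    by simp
qed

text \<open>With \<open>h = c + w\<^sup>n P\<close>, the Moebius transform \<open>(h - c)/(1 - cnj c h)\<close> is
  \<open>w\<^sup>n Q\<close> with \<open>Q(0) = P(0)/(1 - \<bar>c\<bar>\<^sup>2)\<close>, and a Schwarz-type bound gives \<open>\<bar>Q(0)\<bar> \<le> 1\<close>.\<close>

lemma schur_coeffs_gap_bound:
  assumes d: "schur_coeffs d" and n: "n \<ge> 1" and d0: "norm (d 0) < 1"
    and gap: "\<And>m. 0 < m \<Longrightarrow> m < n \<Longrightarrow> d m = 0"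
  shows "norm (d n) \<le> 1 - norm (d 0)^2"
proof -
  define c where "c = d 0"
  define h where "h w = (\<Sum>m. d m * w ^ m)" for w
  define P where "P w = (\<Sum>m. d (m + n) * w ^ m)" for w
  define Q where "Q w = P w / (1 - cnj c * (c + w ^ n * P w))" for w
  have summ: "summable (\<lambda>m. d m * w ^ m)" and h_le: "norm (h w) \<le> 1" if "norm w < 1" for w
    using d that unfolding schur_coeffs_def h_def by auto
  have initial: "(\<Sum>i<n. d i * w ^ i) = c" for w
    using n gap by (subst sum.remove[of _ 0]) (auto simp: c_def intro!: sum.neutral)
  have h: "h w = c + w ^ n * P w" if "norm w < 1" for w
    using powser_split_power_mult(3)[where n=n, OF summ that] unfolding h_def P_def initial .
  have den: "1 - cnj c * h w \<noteq> 0" if "norm w < 1" for w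
  proof -
    have "norm (cnj c * h w) \<le> norm c"
      using h_le[OF that] mult_left_mono[of "norm (h w)" 1 "norm c"] by (simp add: norm_mult)
    then show ?thesis
      using d0 by (auto simp: c_def)
  qed
  have "Q holomorphic_on ball 0 1"
    unfolding Q_def using powser_split_power_mult(1)[where n=n, OF summ] den h
    by (intro holomorphic_intros) (auto simp: P_def)
  moreover have "norm (w ^ n * Q w) \<le> 1" if w: "norm w < 1" for w
  proof -
    have "w ^ n * Q w = (h w - c) / (1 - cnj c * h w)"
      unfolding Q_def h[OF w] by simp
    then show ?thesis
      using norm_diff_le_norm_one_minus_cnj_mult[OF h_le[OF w], of c] d0 den[OF w]
      by (simp add: c_def norm_divide divide_le_eq_1)
  qed
  ultimately have "norm (Q 0) \<le> 1"
    by (rule norm_at_0_le_1_if_power_mult_bounded)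
  moreover have "Q 0 = d n / of_real (1 - norm c ^ 2)"
  proof -
    have "cnj c * c = of_real (norm c ^ 2)"
      by (simp add: complex_norm_square[symmetric] mult.commute)
    then show ?thesis
      using n powser_split_power_mult(2)[where n=n, OF summ] by (simp add: Q_def P_def zero_power)
  qed
  moreover have pos: "1 - norm c ^ 2 > 0"
    using d0 by (simp add: c_def abs_square_less_1)
  ultimately have "norm (d n) / (1 - norm c ^ 2) \<le> 1"
    by (simp only: norm_divide norm_of_real abs_of_pos)
  then show ?thesis
    using pos by (simp add: c_def divide_le_eq)
qed

text \<open>The gap bound is applied to the lacunary part of \<open>t b\<close>; the factor \<open>t < 1\<close> secures
  \<open>\<bar>t b\<^sub>0\<bar> < 1\<close>, and \<open>t \<rightarrow> 1\<close> then gives the inequality.\<close>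

lemma schur_coeffs_Wiener_inequality:
  assumes b: "schur_coeffs b" and n: "n \<ge> 1"
  shows "norm (b n) \<le> 1 - norm (b 0)^2"
proof -
  have bound: "t * norm (b n) + t^2 * norm (b 0)^2 \<le> 1" if t: "0 < t" "t < 1" for t
  proof -
    let ?d = "\<lambda>m. if n dvd m then of_real t * b m else 0"
    have "schur_coeffs ?d"
      using t by (intro schur_coeffs_lacunary schur_coeffs_scale b n) auto
    moreover have "norm (?d 0) < 1"
    proof -
      have "t * norm (b 0) \<le> t * 1"
        using t schur_coeffs_norm_0_le[OF b] by (intro mult_left_mono) auto
      then have "t * norm (b 0) < 1"
        using t by linarith
      then show ?thesis
        using t by (simp add: norm_mult)
    qed
    moreover have "?d m = 0" if "0 < m" "m < n" for m
      using that by (auto dest: dvd_imp_le)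
    ultimately have "norm (?d n) \<le> 1 - norm (?d 0)^2"
      using n by (intro schur_coeffs_gap_bound) auto
    then show ?thesis
      using t by (simp add: norm_mult power_mult_distrib)
  qed
  have "((\<lambda>t. t * norm (b n) + t^2 * norm (b 0)^2) \<longlongrightarrow> 1 * norm (b n) + 1^2 * norm (b 0)^2)
      (at_left 1)"
    by (intro tendsto_intros)
  then have "1 * norm (b n) + 1^2 * norm (b 0)^2 \<le> 1"
    using bound by (rule tendsto_at_left_1_le)
  then show ?thesis
    by simp
qed

lemma schur_coeffs_norm_le_1:
  assumes "schur_coeffs b"
  shows "norm (b n) \<le> 1"
proof (cases "n = 0")
  case False
  then have "norm (b n) \<le> 1 - norm (b 0)^2"
    using assms by (intro schur_coeffs_Wiener_inequality) auto
  then show ?thesis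
    using zero_le_power2[of "norm (b 0)"] by linarith
qed (use schur_coeffs_norm_0_le[OF assms] in simp)

section \<open>The series \<open>S(\<rho>) = \<Sum>\<^bsub>n\<ge>1\<^esub> \<rho>\<^sup>n/(n + \<beta>)\<close>\<close>

text \<open>For \<open>\<beta> = 0\<close> this would be \<open>-ln (1 - \<rho>)\<close>.\<close>

definition shifted_log_series :: "real \<Rightarrow> real \<Rightarrow> real" where
  "shifted_log_series \<beta> \<rho> = (\<Sum>n. \<rho> ^ Suc n / (real (Suc n) + \<beta>))"

lemma rho_eq_shifted_log_series: "rho_eq \<beta> \<rho> = 1 / \<beta> - 2 * shifted_log_series \<beta> \<rho>"
  by (simp add: rho_eq_def shifted_log_series_def)

lemma shifted_log_series_0 [simp]: "shifted_log_series \<beta> 0 = 0"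
  by (simp add: shifted_log_series_def)

lemma summable_shifted_log_series:
  assumes "\<beta> > 0" "\<bar>\<rho>\<bar> < 1"
  shows "summable (\<lambda>n. \<rho> ^ Suc n / (real (Suc n) + \<beta>))"
proof (rule summable_comparison_test[OF _ summable_geometric[of "\<bar>\<rho>\<bar>"]])
  have "\<bar>\<rho>\<bar> ^ Suc n / (real (Suc n) + \<beta>) \<le> \<bar>\<rho>\<bar> ^ Suc n / 1" for n
    using assms by (intro divide_left_mono) auto
  also have "\<bar>\<rho>\<bar> ^ Suc n / 1 \<le> \<bar>\<rho>\<bar> ^ n" for n
    using assms by (simp add: mult_left_le_one_le)
  finally have "\<bar>\<rho>\<bar> ^ Suc n / (real (Suc n) + \<beta>) \<le> \<bar>\<rho>\<bar> ^ n" for n .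
  then show "\<exists>N. \<forall>n\<ge>N. norm (\<rho> ^ Suc n / (real (Suc n) + \<beta>)) \<le> \<bar>\<rho>\<bar> ^ n"
    using assms by (simp add: abs_mult power_abs)
qed (use assms in simp)

lemma shifted_log_series_strict_mono:
  assumes "\<beta> > 0" "0 \<le> \<rho>" "\<rho> < \<sigma>" "\<sigma> < 1"
  shows "shifted_log_series \<beta> \<rho> < shifted_log_series \<beta> \<sigma>"
proof -
  let ?f = "\<lambda>\<rho> n. \<rho> ^ Suc n / (real (Suc n) + \<beta>)"
  have summ: "summable (?f \<rho>)" "summable (?f \<sigma>)"
    using summable_shifted_log_series[of \<beta> \<rho>] summable_shifted_log_series[of \<beta> \<sigma>] assms
    by auto
  have "0 < (\<Sum>n. ?f \<sigma> n - ?f \<rho> n)"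
  proof (rule suminf_pos)
    show "summable (\<lambda>n. ?f \<sigma> n - ?f \<rho> n)"
      using summ by (rule summable_diff[rotated])
    show "0 < ?f \<sigma> n - ?f \<rho> n" for n
      using assms power_strict_mono[of \<rho> \<sigma> "Suc n"] by (simp add: divide_strict_right_mono)
  qed
  also have "\<dots> = shifted_log_series \<beta> \<sigma> - shifted_log_series \<beta> \<rho>"
    unfolding shifted_log_series_def by (rule suminf_diff[symmetric, OF summ(2,1)])
  finally show ?thesis
    by simp
qed

lemma shifted_log_series_mono:
  assumes "\<beta> > 0" "0 \<le> \<rho>" "\<rho> \<le> \<sigma>" "\<sigma> < 1"
  shows "shifted_log_series \<beta> \<rho> \<le> shifted_log_series \<beta> \<sigma>"
  using shifted_log_series_strict_mono[of \<beta> \<rho> \<sigma>] assms by (cases "\<rho> = \<sigma>") auto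

lemma isCont_shifted_log_series:
  assumes "\<beta> > 0" "\<bar>\<rho>\<bar> < 1"
  shows "isCont (shifted_log_series \<beta>) \<rho>"
proof -
  define c where "c n = 1 / (real (Suc n) + \<beta>)" for n
  define K where "K = (1 + \<bar>\<rho>\<bar>) / 2"
  have K: "\<bar>\<rho>\<bar> < K" "K < 1"
    using assms by (auto simp: K_def)
  have summ_K: "summable (\<lambda>n. c n * K ^ n)"
  proof (rule summable_comparison_test[OF _ summable_geometric[of K]])
    have "c n * K ^ n \<le> 1 * K ^ n" for n
      using assms K by (intro mult_right_mono) (auto simp: c_def)
    then show "\<exists>N. \<forall>n\<ge>N. norm (c n * K ^ n) \<le> K ^ n"
      using assms K by (auto simp: c_def)
  qed (use K in simp)
  then have "isCont (\<lambda>x. x * (\<Sum>n. c n * x ^ n)) \<rho>"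
    using K by (intro continuous_intros isCont_powser) auto
  moreover have "\<forall>\<^sub>F x in nhds \<rho>. x * (\<Sum>n. c n * x ^ n) = shifted_log_series \<beta> x"
  proof (rule eventually_nhds_in_open[THEN eventually_mono])
    show "open (ball 0 K)" "\<rho> \<in> ball 0 K"
      using K by auto
    fix x :: real assume "x \<in> ball 0 K"
    then have "summable (\<lambda>n. c n * x ^ n)"
      using powser_inside[OF summ_K] K by auto
    then have "(\<lambda>n. x * (c n * x ^ n)) sums (x * (\<Sum>n. c n * x ^ n))"
      by (intro sums_mult summable_sums)
    moreover have "x * (c n * x ^ n) = x ^ Suc n / (real (Suc n) + \<beta>)" for n
      by (simp add: c_def)
    ultimately show "x * (\<Sum>n. c n * x ^ n) = shifted_log_series \<beta> x"
      unfolding shifted_log_series_def by (simp add: sums_iff)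
  qed
  ultimately show ?thesis
    by (rule isCont_cong[THEN iffD1, rotated])
qed

lemma not_summable_inverse_Suc_plus:
  assumes "\<beta> > 0"
  shows "\<not> summable (\<lambda>n. 1 / (real (Suc n) + \<beta>))"
proof
  assume "summable (\<lambda>n. 1 / (real (Suc n) + \<beta>))"
  then have "summable (\<lambda>n. (1 + \<beta>) * (1 / (real (Suc n) + \<beta>)))"
    by (rule summable_mult)
  moreover have "norm (inverse (real (Suc n))) \<le> (1 + \<beta>) * (1 / (real (Suc n) + \<beta>))" for n
    using assms by (simp add: field_simps)
  then have "\<exists>N. \<forall>n\<ge>N. norm (inverse (real (Suc n))) \<le> (1 + \<beta>) * (1 / (real (Suc n) + \<beta>))"
    by blast
  ultimately have "summable (\<lambda>n. inverse (real (Suc n)))"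
    by (rule summable_comparison_test[rotated])
  then show False
    using not_summable_harmonic[where 'a=real] summable_Suc_iff by blast
qed

lemma shifted_log_series_unbounded:
  assumes "\<beta> > 0"
  shows "\<exists>\<rho>. 0 < \<rho> \<and> \<rho> < 1 \<and> c < shifted_log_series \<beta> \<rho>"
proof -
  have "\<exists>N. c < (\<Sum>i<N. 1 / (real (Suc i) + \<beta>))"
  proof (rule ccontr)
    assume "\<not> ?thesis"
    then have "summable (\<lambda>n. 1 / (real (Suc n) + \<beta>))"
      using assms by (intro summableI_nonneg_bounded[where x = c]) (auto simp: not_less)
    then show False
      using not_summable_inverse_Suc_plus[OF assms] by blast
  qed
  then obtain N where N: "c < (\<Sum>i<N. 1 / (real (Suc i) + \<beta>))"
    by blast
  define F where "F \<rho> = (\<Sum>i<N. \<rho> ^ Suc i / (real (Suc i) + \<beta>))" for \<rho> :: real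
  have "(F \<longlongrightarrow> F 1) (at_left 1)"
    unfolding F_def using assms by (intro tendsto_intros) (auto simp: add_pos_pos)
  moreover have "c < F 1"
    using N by (simp add: F_def)
  ultimately obtain \<rho> where \<rho>: "0 < \<rho>" "\<rho> < 1" "c < F \<rho>"
    using tendsto_at_left_1_gt_imp_ex by blast
  have "F \<rho> \<le> shifted_log_series \<beta> \<rho>"
    unfolding F_def shifted_log_series_def using \<rho> assms
    by (intro sum_le_suminf summable_shifted_log_series) auto
  then show ?thesis
    using \<rho> by auto
qed

lemma rho_eq_unique_root:
  assumes "\<beta> > 0"
  shows "\<exists>!\<rho>1. \<rho>1 \<in> {0<..<1} \<and> rho_eq \<beta> \<rho>1 = 0"
proof -
  have root_iff: "rho_eq \<beta> \<rho> = 0 \<longleftrightarrow> shifted_log_series \<beta> \<rho> = 1 / (2 * \<beta>)" for \<rho>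
    unfolding rho_eq_shifted_log_series by (auto simp: field_simps)
  obtain r where r: "0 < r" "r < 1" "1 / (2 * \<beta>) < shifted_log_series \<beta> r"
    using shifted_log_series_unbounded[OF assms] by blast
  have "continuous_on {0..r} (shifted_log_series \<beta>)"
    using r assms by (intro continuous_at_imp_continuous_on ballI isCont_shifted_log_series) auto
  then obtain \<rho>1 where \<rho>1: "0 \<le> \<rho>1" "\<rho>1 \<le> r" "shifted_log_series \<beta> \<rho>1 = 1 / (2 * \<beta>)"
    using IVT'[of "shifted_log_series \<beta>" 0 "1 / (2 * \<beta>)" r] r assms by auto
  then have "\<rho>1 \<noteq> 0"
    using assms by auto
  then have root: "\<rho>1 \<in> {0<..<1} \<and> rho_eq \<beta> \<rho>1 = 0"
    using \<rho>1 r root_iff by auto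
  show ?thesis
  proof (rule ex1I[of _ \<rho>1])
    show "\<rho>1 \<in> {0<..<1} \<and> rho_eq \<beta> \<rho>1 = 0"
      by (fact root)
    fix \<sigma> assume "\<sigma> \<in> {0<..<1} \<and> rho_eq \<beta> \<sigma> = 0"
    then show "\<sigma> = \<rho>1"
      using root root_iff shifted_log_series_strict_mono[OF assms, of \<sigma> \<rho>1]
        shifted_log_series_strict_mono[OF assms, of \<rho>1 \<sigma>]
      by (cases \<sigma> \<rho>1 rule: linorder_cases) auto
  qed
qed

section \<open>The weighted coefficient sum on the unit disc\<close>

lemma lhs_sum_0: "lhs_sum 0 \<beta> b \<rho> = (\<Sum>n. norm (b n) / (real n + \<beta>) * \<rho> ^ n)"
  by (simp add: lhs_sum_def)

lemma summable_lhs_sum_0: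
  assumes "\<And>n. norm (b n) \<le> 1" "\<beta> > 0" "0 \<le> \<rho>" "\<rho> < 1"
  shows "summable (\<lambda>n. norm (b n) / (real n + \<beta>) * \<rho> ^ n)"
proof (rule summable_comparison_test[OF _ summable_divide[OF summable_geometric[of \<rho>], of \<beta>]])
  have "norm (b n) / (real n + \<beta>) * \<rho> ^ n \<le> 1 / \<beta> * \<rho> ^ n" for n
    using assms by (intro mult_right_mono frac_le) auto
  then show "\<exists>N. \<forall>n\<ge>N. norm (norm (b n) / (real n + \<beta>) * \<rho> ^ n) \<le> \<rho> ^ n / \<beta>"
    using assms by simp
qed (use assms in simp)

lemma schur_coeffs_lhs_sum_le_shifted_log_series:
  assumes b: "schur_coeffs b" and \<beta>: "\<beta> > 0" and \<rho>: "0 \<le> \<rho>" "\<rho> < 1"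
  shows "lhs_sum 0 \<beta> b \<rho> \<le> norm (b 0) / \<beta> + (1 - norm (b 0)^2) * shifted_log_series \<beta> \<rho>"
proof -
  define A where "A = norm (b 0)"
  define u where "u n = (if n = 0 then A / \<beta> else (1 - A^2) * (\<rho> ^ n / (real n + \<beta>)))" for n
  have "norm (b n) / (real n + \<beta>) * \<rho> ^ n \<le> u n" for n
  proof (cases "n = 0")
    case False
    then have "norm (b n) / (real n + \<beta>) \<le> (1 - A^2) / (real n + \<beta>)"
      using schur_coeffs_Wiener_inequality[OF b, of n] \<beta> by (intro divide_right_mono) (auto simp: A_def)
    then show ?thesis
      using False \<rho> mult_right_mono by (fastforce simp: u_def)
  qed (simp add: u_def A_def)
  moreover have "(\<lambda>n. norm (b n) / (real n + \<beta>) * \<rho> ^ n) sums lhs_sum 0 \<beta> b \<rho>"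
    unfolding lhs_sum_0 using schur_coeffs_norm_le_1[OF b] \<beta> \<rho>
    by (intro summable_sums summable_lhs_sum_0) auto
  moreover have "u sums ((1 - A^2) * shifted_log_series \<beta> \<rho> + A / \<beta>)"
  proof -
    have "(\<lambda>n. (1 - A^2) * (\<rho> ^ Suc n / (real (Suc n) + \<beta>))) sums ((1 - A^2) * shifted_log_series \<beta> \<rho>)"
      unfolding shifted_log_series_def using \<beta> \<rho>
      by (intro sums_mult summable_sums summable_shifted_log_series) auto
    then have "(\<lambda>n. u (Suc n)) sums ((1 - A^2) * shifted_log_series \<beta> \<rho>)"
      by (simp add: u_def)
    then show ?thesis
      by (subst (asm) sums_Suc_iff) (simp add: u_def)
  qed
  ultimately have "lhs_sum 0 \<beta> b \<rho> \<le> (1 - A^2) * shifted_log_series \<beta> \<rho> + A / \<beta>"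
    by (rule sums_le)
  then show ?thesis
    unfolding A_def by linarith
qed

lemma schur_coeffs_lhs_sum_le:
  assumes b: "schur_coeffs b" and \<beta>: "\<beta> > 0" and \<rho>: "0 \<le> \<rho>" "\<rho> < 1"
    and S: "2 * \<beta> * shifted_log_series \<beta> \<rho> \<le> 1"
  shows "lhs_sum 0 \<beta> b \<rho> \<le> 1 / \<beta>"
proof -
  define A where "A = norm (b 0)"
  have "0 \<le> 1 - A^2"
    using schur_coeffs_norm_0_le[OF b] by (simp add: A_def power_le_one)
  moreover have "shifted_log_series \<beta> \<rho> \<le> 1 / (2 * \<beta>)"
    using S \<beta> by (simp add: field_simps)
  ultimately have "A / \<beta> + (1 - A^2) * shifted_log_series \<beta> \<rho> \<le> A / \<beta> + (1 - A^2) * (1 / (2 * \<beta>))"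
    by (intro add_left_mono mult_left_mono)
  also have "\<dots> = 1 / \<beta> - (1 - A)^2 / (2 * \<beta>)"
    using \<beta> by (simp add: field_simps power2_eq_square)
  also have "\<dots> \<le> 1 / \<beta>"
    using \<beta> by simp
  finally show ?thesis
    using schur_coeffs_lhs_sum_le_shifted_log_series[OF b \<beta> \<rho>] unfolding A_def by linarith
qed

definition mobius_coeffs :: "real \<Rightarrow> nat \<Rightarrow> complex" where
  "mobius_coeffs t n = (case n of 0 \<Rightarrow> of_real t | Suc m \<Rightarrow> - of_real ((1 - t^2) * t ^ m))"

lemma norm_mobius_coeffs:
  assumes "0 \<le> t" "t \<le> 1"
  shows "norm (mobius_coeffs t 0) = t" "norm (mobius_coeffs t (Suc m)) = (1 - t^2) * t ^ m"
proof -
  show "norm (mobius_coeffs t 0) = t"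
    using assms by (simp add: mobius_coeffs_def)
  have "0 \<le> (1 - t^2) * t ^ m"
    using assms by (simp add: power_le_one)
  then show "norm (mobius_coeffs t (Suc m)) = (1 - t^2) * t ^ m"
    by (simp only: mobius_coeffs_def nat.case norm_minus_cancel norm_of_real abs_of_nonneg)
qed

lemma norm_mobius_coeffs_le_1:
  assumes "0 \<le> t" "t \<le> 1"
  shows "norm (mobius_coeffs t n) \<le> 1"
proof (cases n)
  case (Suc m)
  have "(1 - t^2) * t ^ m \<le> 1 * 1"
    using assms by (intro mult_mono) (auto simp: power_le_one)
  then show ?thesis
    using assms Suc by (simp add: norm_mobius_coeffs)
qed (use assms norm_mobius_coeffs in auto)

lemma norm_of_real_mult_less_1:
  fixes w :: complex
  assumes "0 \<le> t" "t \<le> 1" "norm w < 1"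
  shows "norm (of_real t * w) < 1"
  using assms mult_left_le_one_le[of "norm w" t] by (simp add: norm_mult)

lemma mobius_coeffs_sums:
  assumes t: "0 \<le> t" "t < 1" and w: "norm w < 1"
  shows "(\<lambda>n. mobius_coeffs t n * w ^ n) sums ((of_real t - w) / (1 - of_real t * w))"
proof -
  have tw: "norm (of_real t * w) < 1"
    using t w by (intro norm_of_real_mult_less_1) auto
  then have "(\<lambda>m. (- of_real (1 - t^2) * w) * (of_real t * w) ^ m) sums
      ((- of_real (1 - t^2) * w) * (1 / (1 - of_real t * w)))"
    by (intro sums_mult geometric_sums)
  moreover have "(- of_real (1 - t^2) * w) * (of_real t * w) ^ m = mobius_coeffs t (Suc m) * w ^ Suc m" for m
    by (simp add: mobius_coeffs_def power_mult_distrib algebra_simps)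
  ultimately have "(\<lambda>m. mobius_coeffs t (Suc m) * w ^ Suc m) sums
      ((- of_real (1 - t^2) * w) * (1 / (1 - of_real t * w)))"
    by (simp only:)
  then have "(\<lambda>n. mobius_coeffs t n * w ^ n) sums
      ((- of_real (1 - t^2) * w) * (1 / (1 - of_real t * w)) + mobius_coeffs t 0 * w ^ 0)"
    by (subst (asm) sums_Suc_iff)
  moreover have "1 - of_real t * w \<noteq> 0"
    using tw by auto
  ultimately show ?thesis
    by (simp add: mobius_coeffs_def field_simps power2_eq_square)
qed

lemma lhs_sum_mobius_coeffs_ge:
  assumes t: "0 \<le> t" "t < 1" and \<beta>: "\<beta> > 0" and \<rho>: "0 \<le> \<rho>" "\<rho> < 1"
  shows "t / \<beta> + (1 - t^2) * (\<Sum>i<N. t ^ i * (\<rho> ^ Suc i / (real (Suc i) + \<beta>)))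
    \<le> lhs_sum 0 \<beta> (mobius_coeffs t) \<rho>"
proof -
  let ?term = "\<lambda>n. norm (mobius_coeffs t n) / (real n + \<beta>) * \<rho> ^ n"
  have "(\<Sum>n<Suc N. ?term n) = ?term 0 + (\<Sum>i<N. ?term (Suc i))"
    by (rule sum.lessThan_Suc_shift)
  also have "(\<Sum>i<N. ?term (Suc i)) = (1 - t^2) * (\<Sum>i<N. t ^ i * (\<rho> ^ Suc i / (real (Suc i) + \<beta>)))"
    unfolding sum_distrib_left using t by (intro sum.cong) (simp_all add: norm_mobius_coeffs)
  also have "?term 0 = t / \<beta>"
    using t by (simp add: norm_mobius_coeffs)
  finally have "(\<Sum>n<Suc N. ?term n) = t / \<beta> + (1 - t^2) * (\<Sum>i<N. t ^ i * (\<rho> ^ Suc i / (real (Suc i) + \<beta>)))" .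
  moreover have "(\<Sum>n<Suc N. ?term n) \<le> lhs_sum 0 \<beta> (mobius_coeffs t) \<rho>"
    unfolding lhs_sum_0 using t \<beta> \<rho> norm_mobius_coeffs_le_1[of t]
    by (intro sum_le_suminf summable_lhs_sum_0) auto
  ultimately show ?thesis
    by linarith
qed

text \<open>For the disc automorphism with parameter \<open>t\<close> the sum is
  \<open>t/\<beta> + (1 - t)(1 + t) \<Sum>\<^sub>i t\<^sup>i v\<^sub>i\<close> with \<open>v\<^sub>i = \<rho>\<^bsup>i+1\<^esup>/(i + 1 + \<beta>)\<close>, and a truncation of
  \<open>(1 + t) \<Sum>\<^sub>i t\<^sup>i v\<^sub>i\<close> tends to \<open>2 S(\<rho>) > 1/\<beta>\<close> as \<open>t \<rightarrow> 1\<close>.\<close>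

lemma mobius_coeffs_lhs_sum_gt:
  assumes \<beta>: "\<beta> > 0" and \<rho>: "0 \<le> \<rho>" "\<rho> < 1" and S: "1 < 2 * \<beta> * shifted_log_series \<beta> \<rho>"
  shows "\<exists>t. 0 < t \<and> t < 1 \<and> 1 / \<beta> < lhs_sum 0 \<beta> (mobius_coeffs t) \<rho>"
proof -
  define v where "v i = \<rho> ^ Suc i / (real (Suc i) + \<beta>)" for i
  have "(\<lambda>N. \<Sum>i<N. v i) \<longlonglongrightarrow> shifted_log_series \<beta> \<rho>"
    unfolding shifted_log_series_def v_def using \<beta> \<rho>
    by (intro summable_LIMSEQ summable_shifted_log_series) auto
  moreover have "1 / (2 * \<beta>) < shifted_log_series \<beta> \<rho>"
    using S \<beta> by (simp add: field_simps)
  ultimately obtain N where N: "1 / (2 * \<beta>) < (\<Sum>i<N. v i)"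
    using order_tendstoD(1) eventually_sequentially by (metis order_refl)
  define F where "F t = (1 + t) * (\<Sum>i<N. t ^ i * v i)" for t :: real
  have "(F \<longlongrightarrow> (1 + 1) * (\<Sum>i<N. 1 ^ i * v i)) (at_left 1)"
    unfolding F_def by (intro tendsto_intros)
  moreover have "1 / \<beta> < (1 + 1) * (\<Sum>i<N. 1 ^ i * v i)"
    using N \<beta> by (simp add: field_simps)
  ultimately obtain t where t: "0 < t" "t < 1" "1 / \<beta> < F t"
    using tendsto_at_left_1_gt_imp_ex by blast
  have "1 / \<beta> = t / \<beta> + (1 - t) * (1 / \<beta>)"
    by (simp add: add_divide_distrib[symmetric])
  also have "\<dots> < t / \<beta> + (1 - t) * F t"
    using mult_strict_left_mono[of "1 / \<beta>" "F t" "1 - t"] t by simp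
  also have "\<dots> = t / \<beta> + (1 - t^2) * (\<Sum>i<N. t ^ i * v i)"
    by (simp add: F_def power2_eq_square algebra_simps)
  also have "\<dots> \<le> lhs_sum 0 \<beta> (mobius_coeffs t) \<rho>"
    unfolding v_def using t \<beta> \<rho> by (intro lhs_sum_mobius_coeffs_ge) auto
  finally show ?thesis
    using t by auto
qed

section \<open>Transfer to \<open>\<Omega>\<^sub>\<gamma>\<close>\<close>

lemma mem_Omega_iff:
  assumes "\<gamma> < 1"
  shows "z \<in> Omega \<gamma> \<longleftrightarrow> norm (of_real (1 - \<gamma>) * (z + of_real (\<gamma> / (1 - \<gamma>)))) < 1"
proof -
  define c where "c = complex_of_real (\<gamma> / (1 - \<gamma>))"
  have "z \<in> Omega \<gamma> \<longleftrightarrow> norm (z + c) < 1 / (1 - \<gamma>)"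
    unfolding Omega_def c_def[symmetric] mem_ball dist_norm by (simp add: norm_minus_commute)
  also have "\<dots> \<longleftrightarrow> (1 - \<gamma>) * norm (z + c) < 1"
    using assms by (simp add: pos_less_divide_eq mult.commute)
  also have "(1 - \<gamma>) * norm (z + c) = norm (of_real (1 - \<gamma>) * (z + c))"
    using assms by (simp only: norm_mult norm_of_real abs_of_pos diff_gt_0_iff_gt)
  finally show ?thesis
    unfolding c_def .
qed

lemma lhs_sum_rescale:
  assumes "\<gamma> < 1"
  shows "lhs_sum \<gamma> \<beta> a \<rho> = lhs_sum 0 \<beta> (\<lambda>n. a n / of_real ((1 - \<gamma>) ^ n)) \<rho>"
proof -
  have "norm (complex_of_real ((1 - \<gamma>) ^ n)) = (1 - \<gamma>) ^ n" for n
    using assms by (simp only: norm_of_real) simp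
  then show ?thesis
    unfolding lhs_sum_def norm_divide by (simp add: mult.commute)
qed

lemma schur_coeffs_if_boundedB:
  assumes \<gamma>: "\<gamma> < 1" and f: "boundedB \<gamma> f" "has_expansion \<gamma> f a"
  shows "schur_coeffs (\<lambda>n. a n / of_real ((1 - \<gamma>) ^ n))"
proof (rule schur_coeffsI)
  define c where "c = complex_of_real (\<gamma> / (1 - \<gamma>))"
  define z where "z w = w / of_real (1 - \<gamma>) - c" for w
  fix w :: complex assume w: "norm w < 1"
  have ne: "of_real (1 - \<gamma>) \<noteq> (0::complex)"
    using \<gamma> by simp
  have z_c: "z w + c = w / of_real (1 - \<gamma>)"
    by (simp add: z_def)
  have "of_real (1 - \<gamma>) * (z w + c) = w"
    unfolding z_c by (simp only: times_divide_eq_right nonzero_mult_div_cancel_left[OF ne])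
  then have "z w \<in> Omega \<gamma>"
    using w unfolding mem_Omega_iff[OF \<gamma>] c_def by simp
  then have "(\<lambda>n. a n * (z w + c) ^ n) sums f (z w)" and "norm (f (z w)) \<le> 1"
    using f by (auto simp: boundedB_def has_expansion_def c_def)
  then show "(\<lambda>n. a n / of_real ((1 - \<gamma>) ^ n) * w ^ n) sums f (z w)"
    unfolding z_c by (simp add: power_divide)
  show "norm (f (z w)) \<le> 1" by fact
qed

lemma boundedB_rescale:
  assumes \<gamma>: "\<gamma> < 1"
    and g: "g holomorphic_on ball 0 1" "\<And>w. norm w < 1 \<Longrightarrow> norm (g w) \<le> 1"
      "\<And>w. norm w < 1 \<Longrightarrow> (\<lambda>n. b n * w ^ n) sums g w"
  defines "f \<equiv> \<lambda>z. g (of_real (1 - \<gamma>) * (z + of_real (\<gamma> / (1 - \<gamma>))))"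
  shows "boundedB \<gamma> f" and "has_expansion \<gamma> f (\<lambda>n. b n * of_real ((1 - \<gamma>) ^ n))"
proof -
  have maps: "norm (of_real (1 - \<gamma>) * (z + of_real (\<gamma> / (1 - \<gamma>)))) < 1" if "z \<in> Omega \<gamma>" for z
    using that \<gamma> by (simp only: mem_Omega_iff)
  show "boundedB \<gamma> f"
    unfolding boundedB_def f_def
    using maps g(2) by (auto intro!: holomorphic_on_compose_gen[OF _ g(1), unfolded o_def]
        holomorphic_intros)
  show "has_expansion \<gamma> f (\<lambda>n. b n * of_real ((1 - \<gamma>) ^ n))"
    unfolding has_expansion_def f_def
  proof
    fix z assume "z \<in> Omega \<gamma>"
    then have "(\<lambda>n. b n * (of_real (1 - \<gamma>) * (z + of_real (\<gamma> / (1 - \<gamma>)))) ^ n) sums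
        g (of_real (1 - \<gamma>) * (z + of_real (\<gamma> / (1 - \<gamma>))))"
      using maps g(3) by blast
    then show "(\<lambda>n. b n * of_real ((1 - \<gamma>) ^ n) * (z + of_real (\<gamma> / (1 - \<gamma>))) ^ n) sums
        g (of_real (1 - \<gamma>) * (z + of_real (\<gamma> / (1 - \<gamma>))))"
      by (simp only: power_mult_distrib of_real_power mult.assoc)
  qed
qed

lemma boundedB_lhs_sum_le:
  assumes "\<gamma> < 1" "\<beta> > 0" "0 \<le> \<rho>" "\<rho> < 1" "2 * \<beta> * shifted_log_series \<beta> \<rho> \<le> 1"
    and "boundedB \<gamma> f" "has_expansion \<gamma> f a"
  shows "lhs_sum \<gamma> \<beta> a \<rho> \<le> 1 / \<beta>"
  unfolding lhs_sum_rescale[OF assms(1)]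
  using assms by (intro schur_coeffs_lhs_sum_le schur_coeffs_if_boundedB)

lemma boundedB_lhs_sum_gt:
  assumes \<gamma>: "\<gamma> < 1" and "\<beta> > 0" "0 \<le> \<rho>" "\<rho> < 1" "1 < 2 * \<beta> * shifted_log_series \<beta> \<rho>"
  shows "\<exists>f a. boundedB \<gamma> f \<and> has_expansion \<gamma> f a \<and> 1 / \<beta> < lhs_sum \<gamma> \<beta> a \<rho>"
proof -
  obtain t where t: "0 < t" "t < 1" and gt: "1 / \<beta> < lhs_sum 0 \<beta> (mobius_coeffs t) \<rho>"
    using mobius_coeffs_lhs_sum_gt assms(2-) by blast
  define g where "g w = (of_real t - w) / (1 - of_real t * w)" for w :: complex
  let ?f = "\<lambda>z. g (of_real (1 - \<gamma>) * (z + of_real (\<gamma> / (1 - \<gamma>))))"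
  let ?a = "\<lambda>n. mobius_coeffs t n * of_real ((1 - \<gamma>) ^ n)"
  have den: "1 - of_real t * w \<noteq> 0" if "norm w < 1" for w :: complex
    using norm_of_real_mult_less_1[of t w] t that by auto
  have holo: "g holomorphic_on ball 0 1"
    unfolding g_def using den by (intro holomorphic_intros) auto
  have bound: "norm (g w) \<le> 1" if "norm w < 1" for w
    using norm_diff_le_norm_one_minus_cnj_mult[of w "of_real t"] that t den[OF that]
    by (simp add: g_def norm_divide divide_le_eq_1 norm_minus_commute)
  have sums: "(\<lambda>n. mobius_coeffs t n * w ^ n) sums g w" if "norm w < 1" for w
    unfolding g_def using t that by (intro mobius_coeffs_sums) auto
  have "boundedB \<gamma> ?f" "has_expansion \<gamma> ?f ?a"
    using boundedB_rescale[OF \<gamma> holo bound sums] by simp_all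
  moreover have "lhs_sum \<gamma> \<beta> ?a \<rho> = lhs_sum 0 \<beta> (mobius_coeffs t) \<rho>"
  proof -
    have "?a n / of_real ((1 - \<gamma>) ^ n) = mobius_coeffs t n" for n
      using \<gamma> by simp
    then show ?thesis
      unfolding lhs_sum_rescale[OF \<gamma>] by simp
  qed
  ultimately show ?thesis
    using gt by (intro exI[of _ ?f] exI[of _ ?a]) simp
qed

theorem theorem2:
  fixes \<gamma> \<beta> :: real
  assumes "0 \<le> \<gamma>" "\<gamma> < 1" "\<beta> > 0"
  shows "(\<exists>!\<rho>1. \<rho>1 \<in> {0<..<1} \<and> rho_eq \<beta> \<rho>1 = 0) \<and>
    (\<forall>\<rho>1. \<rho>1 \<in> {0<..<1} \<and> rho_eq \<beta> \<rho>1 = 0 \<longrightarrow>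
       (\<forall>f a. boundedB \<gamma> f \<and> has_expansion \<gamma> f a \<longrightarrow>
          (\<forall>\<rho>\<in>{0..\<rho>1}. lhs_sum \<gamma> \<beta> a \<rho> \<le> 1 / \<beta>)) \<and>
       (\<forall>\<rho>\<in>{\<rho>1<..<1}. \<exists>f a. boundedB \<gamma> f \<and> has_expansion \<gamma> f a \<and>
          lhs_sum \<gamma> \<beta> a \<rho> > 1 / \<beta>))"
proof (intro conjI allI impI ballI)
  show "\<exists>!\<rho>1. \<rho>1 \<in> {0<..<1} \<and> rho_eq \<beta> \<rho>1 = 0"
    using assms(3) by (rule rho_eq_unique_root)
next
  fix \<rho>1 f a \<rho>
  assume root: "\<rho>1 \<in> {0<..<1} \<and> rho_eq \<beta> \<rho>1 = 0"
    and fa: "boundedB \<gamma> f \<and> has_expansion \<gamma> f a" and \<rho>: "\<rho> \<in> {0..\<rho>1}"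
  have "2 * \<beta> * shifted_log_series \<beta> \<rho> \<le> 2 * \<beta> * shifted_log_series \<beta> \<rho>1"
    using assms root \<rho> by (intro mult_left_mono shifted_log_series_mono) auto
  also have "\<dots> = 1"
    using root assms by (simp add: rho_eq_shifted_log_series field_simps)
  finally show "lhs_sum \<gamma> \<beta> a \<rho> \<le> 1 / \<beta>"
    using assms root \<rho> fa by (intro boundedB_lhs_sum_le) auto
next
  fix \<rho>1 \<rho>
  assume root: "\<rho>1 \<in> {0<..<1} \<and> rho_eq \<beta> \<rho>1 = 0" and \<rho>: "\<rho> \<in> {\<rho>1<..<1}"
  have "1 = 2 * \<beta> * shifted_log_series \<beta> \<rho>1"
    using root assms by (simp add: rho_eq_shifted_log_series field_simps)
  also have "\<dots> < 2 * \<beta> * shifted_log_series \<beta> \<rho>"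
    using assms root \<rho> by (intro mult_strict_left_mono shifted_log_series_strict_mono) auto
  finally show "\<exists>f a. boundedB \<gamma> f \<and> has_expansion \<gamma> f a \<and> lhs_sum \<gamma> \<beta> a \<rho> > 1 / \<beta>"
    using assms root \<rho> by (intro boundedB_lhs_sum_gt) auto
qed

end
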